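(* Let $S$ be a semigroup such that $E(S)$ is a semilattice. Then the $\mathcal{L}^*$-classes of idempotents form a meet semilattice under the partial order on $S/\mathcal{L}^*$ induced by $\leq_{\mathcal{L}^*}$, and for all $e,f\in E(S)$ we have $L^*_e\wedge L^*_f=L^*_{ef}$.
   Context: On $S$, $a\leq_{\mathcal{L}^*}b$ iff for all $x,y\in S^1$, $bx=by$ implies $ax=ay$; $\mathcal{L}^*$ is the associated equivalence ($a\,\mathcal{L}^*\,b$ iff for all $x,y\in S^1$, $ax=ay\Leftrightarrow bx=by$), and $L^*_a$ denotes the $\mathcal{L}^*$-class of $a$. $E(S)$ is the set of idempotents; it is a semilattice when idempotents commute. *)

theory Defs
  imports Main
begin

text \<open>The semigroup S is the carrier type 'a (class semigroup_mult).
  Elements of S^1 are represented as 'a option, None being the adjoined identity.\<close>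

fun rmul1 :: "'a::semigroup_mult \<Rightarrow> 'a option \<Rightarrow> 'a" where
  "rmul1 a None = a"
| "rmul1 a (Some x) = a * x"

definition idem :: "'a::semigroup_mult \<Rightarrow> bool" where
  "idem e \<longleftrightarrow> e * e = e"

definition Lstar_le :: "'a::semigroup_mult \<Rightarrow> 'a \<Rightarrow> bool" where
  "Lstar_le a b \<longleftrightarrow> (\<forall>x y. rmul1 b x = rmul1 b y \<longrightarrow> rmul1 a x = rmul1 a y)"

definition Lstar :: "'a::semigroup_mult \<Rightarrow> 'a \<Rightarrow> bool" where
  "Lstar a b \<longleftrightarrow> (\<forall>x y. rmul1 a x = rmul1 a y \<longleftrightarrow> rmul1 b x = rmul1 b y)"

definition Lclass :: "'a::semigroup_mult \<Rightarrow> 'a set" where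
  "Lclass a = {b. Lstar a b}"

definition cls_le :: "'a::semigroup_mult set \<Rightarrow> 'a set \<Rightarrow> bool" where
  "cls_le A B \<longleftrightarrow> (\<exists>a\<in>A. \<exists>b\<in>B. Lstar_le a b)"

definition idem_classes :: "'a::semigroup_mult set set" where
  "idem_classes = {Lclass e | e. idem e}"

definition idempotents_commute :: "'a::semigroup_mult itself \<Rightarrow> bool" where
  "idempotents_commute _ \<longleftrightarrow> (\<forall>e f::'a. idem e \<and> idem f \<longrightarrow> e * f = f * e)"

definition is_glb_in :: "'b set \<Rightarrow> ('b \<Rightarrow> 'b \<Rightarrow> bool) \<Rightarrow> 'b \<Rightarrow> 'b \<Rightarrow> 'b \<Rightarrow> bool" where
  "is_glb_in P le x y m \<longleftrightarrow> m \<in> P \<and> le m x \<and> le m y \<and>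
     (\<forall>z\<in>P. le z x \<and> le z y \<longrightarrow> le z m)"

definition meet_semilattice_on :: "'b set \<Rightarrow> ('b \<Rightarrow> 'b \<Rightarrow> bool) \<Rightarrow> bool" where
  "meet_semilattice_on P le \<longleftrightarrow>
     (\<forall>x\<in>P. le x x) \<and>
     (\<forall>x\<in>P. \<forall>y\<in>P. le x y \<and> le y x \<longrightarrow> x = y) \<and>
     (\<forall>x\<in>P. \<forall>y\<in>P. \<forall>z\<in>P. le x y \<and> le y z \<longrightarrow> le x z) \<and>
     (\<forall>x\<in>P. \<forall>y\<in>P. \<exists>m. is_glb_in P le x y m)"

end

theory Submission
  imports Defs
begin

text \<open>For an idempotent \<open>e\<close> one has \<open>a \<le>\<^sub>L\<^sub>* e\<close> iff \<open>a e = a\<close>, so on the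
  \<open>\<L>\<^sup>*\<close>-classes of idempotents the induced order is the natural order of \<open>E(S)\<close>:
  \<open>L\<^sup>*\<^sub>e \<le> L\<^sup>*\<^sub>f\<close> iff \<open>e f = e\<close>. When idempotents commute, \<open>e f\<close> is idempotent,
  lies below \<open>e\<close> and \<open>f\<close>, and every idempotent \<open>g\<close> below both satisfies
  \<open>g e f = g\<close>; hence \<open>L\<^sup>*\<^sub>e\<^sub>f\<close> is the meet.\<close>

lemma Lstar_refl: "Lstar a a"
  unfolding Lstar_def by blast

lemma Lstar_sym: "Lstar a b \<Longrightarrow> Lstar b a"
  unfolding Lstar_def by blast

lemma Lstar_trans: "Lstar a b \<Longrightarrow> Lstar b c \<Longrightarrow> Lstar a c"
  unfolding Lstar_def by blast

lemma Lstar_le_refl: "Lstar_le a a"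
  unfolding Lstar_le_def by blast

lemma Lstar_le_trans: "Lstar_le a b \<Longrightarrow> Lstar_le b c \<Longrightarrow> Lstar_le a c"
  unfolding Lstar_le_def by blast

lemma Lstar_iff_Lstar_le: "Lstar a b \<longleftrightarrow> Lstar_le a b \<and> Lstar_le b a"
  unfolding Lstar_def Lstar_le_def by blast

lemma Lclass_eq_iff: "Lclass a = Lclass b \<longleftrightarrow> Lstar a b"
proof
  assume "Lclass a = Lclass b"
  then show "Lstar a b"
    using Lstar_refl[of b] by (auto simp: Lclass_def)
next
  assume "Lstar a b"
  then have "Lstar a c \<longleftrightarrow> Lstar b c" for c
    using Lstar_sym Lstar_trans by metis
  then show "Lclass a = Lclass b"
    by (simp add: Lclass_def)
qed

lemma cls_le_Lclass_iff: "cls_le (Lclass a) (Lclass b) \<longleftrightarrow> Lstar_le a b"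
proof
  assume "cls_le (Lclass a) (Lclass b)"
  then obtain a' b' where "Lstar a a'" "Lstar b b'" "Lstar_le a' b'"
    unfolding cls_le_def Lclass_def by blast
  then show "Lstar_le a b"
    unfolding Lstar_iff_Lstar_le using Lstar_le_trans by blast
next
  assume "Lstar_le a b"
  then show "cls_le (Lclass a) (Lclass b)"
    unfolding cls_le_def Lclass_def using Lstar_refl by blast
qed

lemma rmul1_mult: "rmul1 (a * b) x = a * rmul1 b x"
  by (cases x) (simp_all add: mult.assoc)

lemma Lstar_le_idem_iff:
  assumes "idem e"
  shows "Lstar_le a e \<longleftrightarrow> a * e = a"
proof
  assume "Lstar_le a e"
  moreover have "rmul1 e (Some e) = rmul1 e None"
    using assms by (simp add: idem_def)
  ultimately have "rmul1 a (Some e) = rmul1 a None"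
    unfolding Lstar_le_def by blast
  then show "a * e = a" by simp
next
  assume ae: "a * e = a"
  show "Lstar_le a e"
    unfolding Lstar_le_def
  proof (intro allI impI)
    fix x y
    assume "rmul1 e x = rmul1 e y"
    then have "rmul1 (a * e) x = rmul1 (a * e) y" by (simp add: rmul1_mult)
    then show "rmul1 a x = rmul1 a y" by (simp add: ae)
  qed
qed

lemma idem_mult_commuting:
  assumes "idem e" "idem f" "e * f = f * e"
  shows "idem (e * f)"
proof -
  have "e * f * (e * f) = e * (f * e) * f" by (simp add: mult.assoc)
  also have "\<dots> = e * (e * f) * f" by (simp only: assms(3))
  also have "\<dots> = (e * e) * (f * f)" by (simp add: mult.assoc)
  finally show ?thesis using assms(1,2) by (simp add: idem_def)
qed

lemma is_glb_in_Lclass_mult: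
  fixes e f :: "'a::semigroup_mult"
  assumes e: "idem e" and f: "idem f" and comm: "e * f = f * e"
  shows "is_glb_in idem_classes cls_le (Lclass e) (Lclass f) (Lclass (e * f))"
proof -
  have ef: "idem (e * f)"
    using idem_mult_commuting[OF e f comm] .
  have below_e: "Lstar_le (e * f) e"
  proof -
    have "e * f * e = e * (f * e)" by (simp add: mult.assoc)
    also have "\<dots> = e * (e * f)" by (simp only: comm)
    also have "\<dots> = e * f" using e by (simp add: idem_def flip: mult.assoc)
    finally show ?thesis by (simp add: Lstar_le_idem_iff[OF e])
  qed
  have below_f: "Lstar_le (e * f) f"
    using f by (simp add: Lstar_le_idem_iff[OF f] idem_def mult.assoc)
  have greatest: "Lstar_le g (e * f)" if "Lstar_le g e" "Lstar_le g f" for g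
  proof -
    have "g * e = g" "g * f = g"
      using that by (simp_all add: Lstar_le_idem_iff[OF e] Lstar_le_idem_iff[OF f])
    then have "g * (e * f) = g" by (simp flip: mult.assoc)
    then show ?thesis by (simp add: Lstar_le_idem_iff[OF ef])
  qed
  have "Lclass (e * f) \<in> idem_classes"
    using ef unfolding idem_classes_def by blast
  moreover have "cls_le Z (Lclass (e * f))"
    if "Z \<in> idem_classes" "cls_le Z (Lclass e)" "cls_le Z (Lclass f)" for Z
    using that greatest unfolding idem_classes_def by (auto simp: cls_le_Lclass_iff)
  ultimately show ?thesis
    unfolding is_glb_in_def by (simp add: cls_le_Lclass_iff below_e below_f)
qed

lemma meet_semilattice_on_idem_classes:
  assumes "idempotents_commute TYPE('a::semigroup_mult)"
  shows "meet_semilattice_on (idem_classes :: 'a set set) cls_le"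
  unfolding meet_semilattice_on_def
proof (intro conjI ballI impI)
  fix X Y Z :: "'a set"
  assume "X \<in> idem_classes" "Y \<in> idem_classes" "Z \<in> idem_classes"
  then obtain e f g where e: "idem e" "X = Lclass e" and f: "idem f" "Y = Lclass f"
    and g: "Z = Lclass g"
    unfolding idem_classes_def by blast
  show "cls_le X X"
    using e by (simp add: cls_le_Lclass_iff Lstar_le_refl)
  show "X = Y" if "cls_le X Y \<and> cls_le Y X"
    using that e f by (simp add: cls_le_Lclass_iff Lclass_eq_iff Lstar_iff_Lstar_le)
  show "cls_le X Z" if "cls_le X Y \<and> cls_le Y Z"
    using that e f g by (auto simp: cls_le_Lclass_iff intro: Lstar_le_trans)
  show "\<exists>M. is_glb_in idem_classes cls_le X Y M"
    using e f assms is_glb_in_Lclass_mult unfolding idempotents_commute_def by blast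
qed

theorem lemma4p3:
  assumes "idempotents_commute TYPE('a::semigroup_mult)"
  shows "meet_semilattice_on (idem_classes :: 'a set set) cls_le \<and>
         (\<forall>e f::'a. idem e \<and> idem f \<longrightarrow>
            is_glb_in idem_classes cls_le (Lclass e) (Lclass f) (Lclass (e * f)))"
  using assms meet_semilattice_on_idem_classes is_glb_in_Lclass_mult
  unfolding idempotents_commute_def by blast

end
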